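(* Let $k\ge 2$ be an integer and let $q=p^r$ be a prime power with $p>k$. If $A\subset\mathbb{F}_q^n$ has size \[ |A|>(k+1)\cdot\binom{n+(k-1)q}{(k-1)(q-1)}, \] then $A$ contains a $k$-right corner.
   Context: $\mathbb{F}_q^n$ carries the standard bilinear form $\langle u,v\rangle=\sum_{i=1}^n u_iv_i$. Vectors $x_1,\dots,x_k,x_{k+1}\in\mathbb{F}_q^n$ form a $k$-right corner if they are pairwise distinct and the $k$ vectors $x_1-x_{k+1},\dots,x_k-x_{k+1}$ are mutually orthogonal, i.e. $\langle x_i-x_{k+1},x_j-x_{k+1}\rangle=0$ for all $1\le i<j\le k$. *)

theory Defs
  imports "HOL-Analysis.Analysis"
begin

text \<open>Vectors of F_q^n are modelled as functions nat => 'a vanishing outside {..<n}.\<close>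

definition Fvec :: "nat \<Rightarrow> (nat \<Rightarrow> 'a::zero) set" where
  "Fvec n = {x. \<forall>i\<ge>n. x i = 0}"

definition bform :: "nat \<Rightarrow> (nat \<Rightarrow> 'a::comm_ring_1) \<Rightarrow> (nat \<Rightarrow> 'a) \<Rightarrow> 'a" where
  "bform n u v = (\<Sum>i<n. u i * v i)"

definition right_corner :: "nat \<Rightarrow> nat \<Rightarrow> (nat \<Rightarrow> nat \<Rightarrow> 'a::comm_ring_1) \<Rightarrow> bool" where
  "right_corner n k x \<longleftrightarrow>
     (\<forall>i\<in>{1..k+1}. x i \<in> Fvec n) \<and>
     inj_on x {1..k+1} \<and>
     (\<forall>i j. 1 \<le> i \<and> i < j \<and> j \<le> k \<longrightarrow>
        bform n (\<lambda>t. x i t - x (k+1) t) (\<lambda>t. x j t - x (k+1) t) = 0)"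

end

theory Submission
  imports Defs "HOL-Library.Multiset"
begin

text \<open>Take a maximal family of pairwise disjoint (k-1)-right corners in A; what is
left of A contains no (k-1)-right corner and is bounded by induction. For the corner with legs
x_1, ..., x_(k-1) and apex z the polynomial \<Prod>_t (1 - \<langle>x_t - z, y - z\<rangle>^(q-1)), of degree
(k-1)(q-1), equals 1 at y = z and vanishes at the apex of every other corner of the family, since
otherwise that apex would extend the corner to a k-right corner. These polynomials are therefore
linearly independent, so the family has at most as many members as there are monomials of degree
at most (k-1)(q-1) in n variables, and an inequality between binomial coefficients closes the
induction. The argument works over every finite field.\<close>

lemma finite_field_power_card_minus_one:
  fixes a :: "'a::{field,finite}"
  assumes "a \<noteq> 0"
  shows "a ^ (CARD('a) - 1) = 1"
proof -
  let ?U = "UNIV - {0::'a}"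
  have inj: "inj_on ((*) a) ?U" using assms by (auto simp: inj_on_def)
  have "(*) a ` ?U = ?U"
  proof
    show "?U \<subseteq> (*) a ` ?U"
    proof
      fix y assume "y \<in> ?U"
      then have "y = a * (y / a)" "y / a \<in> ?U" using assms by auto
      then show "y \<in> (*) a ` ?U" by blast
    qed
  qed (use assms in auto)
  then have "(\<Prod>x\<in>?U. x) = (\<Prod>x\<in>?U. a * x)"
    using prod.reindex[OF inj, of "\<lambda>x. x"] by simp
  also have "\<dots> = a ^ card ?U * (\<Prod>x\<in>?U. x)" by (simp add: prod.distrib)
  finally have "a ^ card ?U = 1" by (simp add: prod_zero_iff)
  moreover have "card ?U = CARD('a) - 1" by (simp add: card_Diff_singleton)
  ultimately show ?thesis by simp
qed

lemma card_field_ge_2: "CARD('a::{field,finite}) \<ge> 2"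
proof -
  have "card {0::'a, 1} \<le> CARD('a)" by (rule card_mono) auto
  then show ?thesis by simp
qed

lemma binomial_add_mono:
  assumes "a \<le> a'" "b \<le> b'"
  shows "(a + b) choose b \<le> (a' + b') choose b'"
proof -
  have "(a + b) choose b \<le> (a' + b) choose b" by (rule binomial_right_mono) (use assms in simp)
  also have "\<dots> \<le> (a' + b') choose b'" using assms(2)
  proof (induction b' rule: dec_induct)
    case (step m)
    then show ?case using binomial_Suc_Suc[of "a' + m" m] by simp
  qed simp
  finally show ?thesis .
qed

text \<open>Pascal's rule splits the right-hand side into the two terms bounding the left-hand side.\<close>
lemma binomial_corner_step:
  assumes "1 \<le> j" "2 \<le> q"
  shows "((n + j * (q - 1)) choose (j * (q - 1))) + ((n + (j - 1) * q) choose ((j - 1) * (q - 1)))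
           \<le> (n + j * q) choose (j * (q - 1))"
proof -
  obtain i where j: "j = Suc i" using assms(1) by (cases j) auto
  obtain r where q: "q = Suc (Suc r)" using assms(2) by (metis add_2_eq_Suc le_Suc_ex)
  define D where "D = r + i * Suc r"
  have e1: "n + j * q = Suc (n + j + D)" and e2: "j * (q - 1) = Suc D"
    and e3: "n + (j - 1) * q = (n + i) + i * Suc r" and e4: "(j - 1) * (q - 1) = i * Suc r"
    using j q unfolding D_def by (simp_all add: algebra_simps)
  have "(n + j * q) choose (j * (q - 1)) = ((n + j + D) choose D) + ((n + j + D) choose Suc D)"
    unfolding e1 e2 by (rule binomial_Suc_Suc)
  moreover have "(n + j * (q - 1)) choose (j * (q - 1)) \<le> (n + j + D) choose Suc D"
    using binomial_add_mono[of n "n + i" "Suc D" "Suc D"] unfolding e2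
    by (simp add: j del: binomial_Suc_Suc)
  moreover have "(n + (j - 1) * q) choose ((j - 1) * (q - 1)) \<le> (n + j + D) choose D"
    using binomial_add_mono[of "n + i" "n + j" "i * Suc r" D] unfolding e3 e4
    by (simp add: j D_def del: binomial_Suc_Suc)
  ultimately show ?thesis by linarith
qed

subsection \<open>Polynomial functions of bounded degree\<close>

text \<open>A multiset of size D over {..n} encodes a monomial of degree at most D in the variables
y 0, ..., y (n - 1): every occurrence of n contributes the factor 1.\<close>
definition monomial_fun :: "nat \<Rightarrow> nat multiset \<Rightarrow> (nat \<Rightarrow> 'a::comm_ring_1) \<Rightarrow> 'a" where
  "monomial_fun n M y = (\<Prod>i\<in>#M. if i < n then y i else 1)"

definition poly_funs :: "nat \<Rightarrow> nat \<Rightarrow> ((nat \<Rightarrow> 'a::comm_ring_1) \<Rightarrow> 'a) set" where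
  "poly_funs n D =
     {f. \<exists>c. \<forall>y. f y = (\<Sum>M\<in>multisets_of_size {..n} D. c M * monomial_fun n M y)}"

lemma finite_multisets_of_size_atMost: "finite (multisets_of_size {..n::nat} D)"
  by (simp add: finite_multisets_of_size)

lemma monomial_fun_add: "monomial_fun n (M + N) y = monomial_fun n M y * monomial_fun n N y"
  unfolding monomial_fun_def by simp

lemma poly_funs_add:
  assumes "f \<in> poly_funs n D" "g \<in> poly_funs n D"
  shows "(\<lambda>y. f y + g y) \<in> poly_funs n D"
proof -
  obtain c d where
    "\<forall>y. f y = (\<Sum>M\<in>multisets_of_size {..n} D. c M * monomial_fun n M y)"
    "\<forall>y. g y = (\<Sum>M\<in>multisets_of_size {..n} D. d M * monomial_fun n M y)"
    using assms unfolding poly_funs_def by blast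
  then have "\<forall>y. f y + g y = (\<Sum>M\<in>multisets_of_size {..n} D. (c M + d M) * monomial_fun n M y)"
    by (simp add: sum.distrib distrib_right)
  then show ?thesis unfolding poly_funs_def by (intro CollectI exI[of _ "\<lambda>M. c M + d M"])
qed

lemma poly_funs_scale:
  assumes "f \<in> poly_funs n D"
  shows "(\<lambda>y. a * f y) \<in> poly_funs n D"
proof -
  obtain c where "\<forall>y. f y = (\<Sum>M\<in>multisets_of_size {..n} D. c M * monomial_fun n M y)"
    using assms unfolding poly_funs_def by blast
  then have "\<forall>y. a * f y = (\<Sum>M\<in>multisets_of_size {..n} D. (a * c M) * monomial_fun n M y)"
    by (simp add: sum_distrib_left mult.assoc)
  then show ?thesis unfolding poly_funs_def by (intro CollectI exI[of _ "\<lambda>M. a * c M"])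
qed

lemma poly_funs_zero: "(\<lambda>y. 0) \<in> poly_funs n D"
  unfolding poly_funs_def by (rule CollectI, rule exI[of _ "\<lambda>_. 0"]) simp

lemma poly_funs_diff:
  "f \<in> poly_funs n D \<Longrightarrow> g \<in> poly_funs n D \<Longrightarrow> (\<lambda>y. f y - g y) \<in> poly_funs n D"
  using poly_funs_add[of f n D "\<lambda>y. (-1) * g y"] poly_funs_scale[of g n D "-1"] by simp

lemma poly_funs_sum:
  "finite I \<Longrightarrow> (\<And>i. i \<in> I \<Longrightarrow> f i \<in> poly_funs n D) \<Longrightarrow> (\<lambda>y. \<Sum>i\<in>I. f i y) \<in> poly_funs n D"
  by (induction I rule: finite_induct) (simp_all add: poly_funs_zero poly_funs_add)

lemma poly_funs_const: "(\<lambda>y. a) \<in> poly_funs n D"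
proof -
  let ?M = "replicate_mset D n"
  have M: "?M \<in> multisets_of_size {..n} D" unfolding multisets_of_size_def by auto
  have "(\<Sum>M\<in>multisets_of_size {..n} D. (if M = ?M then a else 0) * monomial_fun n M y) = a"
    for y :: "nat \<Rightarrow> 'a"
    using M finite_multisets_of_size_atMost
    by (simp add: if_distrib[of "\<lambda>c. c * _"] monomial_fun_def cong: if_cong)
  then show ?thesis unfolding poly_funs_def by (intro CollectI exI[of _ "\<lambda>M. if M = ?M then a else 0"]) simp
qed

lemma multisets_of_size_one: "multisets_of_size {..n} 1 = (\<lambda>i. {#i#}) ` {..n}"
proof
  show "multisets_of_size {..n} 1 \<subseteq> (\<lambda>i. {#i#}) ` {..n}"
  proof
    fix M assume "M \<in> multisets_of_size {..n} 1"
    then have "set_mset M \<subseteq> {..n}" "size M = 1" unfolding multisets_of_size_def by auto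
    then show "M \<in> (\<lambda>i. {#i#}) ` {..n}" using size_1_singleton_mset by force
  qed
qed (auto simp: multisets_of_size_def)

lemma poly_funs_affine: "(\<lambda>y. (\<Sum>i<n. u i * y i) + a) \<in> poly_funs n 1"
proof -
  define c where "c M = (if M = {#n#} then a else \<Sum>i<n. if M = {#i#} then u i else 0)" for M
  have c_n: "c {#n#} = a" unfolding c_def by simp
  have c_lt: "c {#i#} = u i" if "i < n" for i
    using that unfolding c_def by (simp add: sum.delta)
  have "(\<Sum>M\<in>multisets_of_size {..n} 1. c M * monomial_fun n M y) = (\<Sum>i\<le>n. c {#i#} * monomial_fun n {#i#} y)"
    for y :: "nat \<Rightarrow> 'a"
    unfolding multisets_of_size_one by (subst sum.reindex) (auto simp: inj_on_def)
  also have "\<dots> y = (\<Sum>i<n. u i * y i) + a" for y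
  proof -
    have "(\<Sum>i\<le>n. c {#i#} * monomial_fun n {#i#} y)
            = (\<Sum>i<n. c {#i#} * monomial_fun n {#i#} y) + c {#n#} * monomial_fun n {#n#} y"
      using sum.lessThan_Suc[of _ n] by (simp only: lessThan_Suc_atMost)
    moreover have "(\<Sum>i<n. c {#i#} * monomial_fun n {#i#} y) = (\<Sum>i<n. u i * y i)"
      by (rule sum.cong) (simp_all add: c_lt monomial_fun_def)
    ultimately show ?thesis by (simp add: c_n monomial_fun_def)
  qed
  finally show ?thesis unfolding poly_funs_def by (intro CollectI exI[of _ c]) simp
qed

lemma multisets_of_size_add:
  "M \<in> multisets_of_size A D1 \<Longrightarrow> N \<in> multisets_of_size A D2 \<Longrightarrow> M + N \<in> multisets_of_size A (D1 + D2)"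
  unfolding multisets_of_size_def by auto

lemma poly_funs_mult:
  assumes "f \<in> poly_funs n D1" "g \<in> poly_funs n D2"
  shows "(\<lambda>y. f y * g y) \<in> poly_funs n (D1 + D2)"
proof -
  let ?MS = "multisets_of_size {..n}"
  obtain a where a: "\<forall>y. f y = (\<Sum>M\<in>?MS D1. a M * monomial_fun n M y)"
    using assms(1) unfolding poly_funs_def by blast
  obtain b where b: "\<forall>y. g y = (\<Sum>M\<in>?MS D2. b M * monomial_fun n M y)"
    using assms(2) unfolding poly_funs_def by blast
  let ?S = "?MS D1 \<times> ?MS D2"
  let ?fiber = "\<lambda>P. {p \<in> ?S. fst p + snd p = P}"
  define c where "c P = (\<Sum>p\<in>?fiber P. a (fst p) * b (snd p))" for P
  have "f y * g y = (\<Sum>P\<in>?MS (D1 + D2). c P * monomial_fun n P y)" for y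
  proof -
    have "f y * g y = (\<Sum>p\<in>?S. a (fst p) * b (snd p) * monomial_fun n (fst p + snd p) y)"
      using a b by (simp add: sum_product sum.cartesian_product monomial_fun_add mult_ac case_prod_beta)
    also have "\<dots> = (\<Sum>P\<in>?MS (D1 + D2). \<Sum>p\<in>?fiber P. a (fst p) * b (snd p) * monomial_fun n (fst p + snd p) y)"
      by (rule sum.group[symmetric]) (auto intro: multisets_of_size_add simp: finite_multisets_of_size_atMost)
    also have "\<dots> = (\<Sum>P\<in>?MS (D1 + D2). c P * monomial_fun n P y)"
      unfolding c_def sum_distrib_right by (intro sum.cong) auto
    finally show ?thesis .
  qed
  then show ?thesis unfolding poly_funs_def by (intro CollectI exI[of _ c]) simp
qed

lemma poly_funs_power: "f \<in> poly_funs n D \<Longrightarrow> (\<lambda>y. f y ^ e) \<in> poly_funs n (e * D)"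
  by (induction e) (simp_all add: poly_funs_const poly_funs_mult)

lemma poly_funs_prod:
  "finite I \<Longrightarrow> (\<And>i. i \<in> I \<Longrightarrow> f i \<in> poly_funs n D) \<Longrightarrow> (\<lambda>y. \<Prod>i\<in>I. f i y) \<in> poly_funs n (card I * D)"
  by (induction I rule: finite_induct) (simp_all add: poly_funs_const poly_funs_mult)

lemma poly_funs_eq_image:
  "poly_funs n D = (\<lambda>c y. \<Sum>M\<in>multisets_of_size {..n} D. c M * monomial_fun n M y)
                     ` (multisets_of_size {..n} D \<rightarrow>\<^sub>E (UNIV :: 'a::comm_ring_1 set))"
  (is "_ = ?E ` ?C")
proof
  show "poly_funs n D \<subseteq> ?E ` ?C"
  proof
    fix f :: "(nat \<Rightarrow> 'a) \<Rightarrow> 'a" assume "f \<in> poly_funs n D"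
    then obtain c where c: "\<forall>y. f y = (\<Sum>M\<in>multisets_of_size {..n} D. c M * monomial_fun n M y)"
      unfolding poly_funs_def by blast
    have "f y = ?E (restrict c (multisets_of_size {..n} D)) y" for y
      unfolding c[rule_format] by (rule sum.cong) simp_all
    then have "f = ?E (restrict c (multisets_of_size {..n} D))" ..
    moreover have "restrict c (multisets_of_size {..n} D) \<in> ?C" by simp
    ultimately show "f \<in> ?E ` ?C" by (rule image_eqI)
  qed
  show "?E ` ?C \<subseteq> poly_funs n D"
    unfolding poly_funs_def by blast
qed

lemma finite_poly_funs: "finite (poly_funs n D :: ((nat \<Rightarrow> 'a::{comm_ring_1,finite}) \<Rightarrow> 'a) set)"
  unfolding poly_funs_eq_image by (simp add: finite_PiE finite_multisets_of_size_atMost)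

lemma card_poly_funs_le:
  "card (poly_funs n D :: ((nat \<Rightarrow> 'a::{comm_ring_1,finite}) \<Rightarrow> 'a) set) \<le> CARD('a) ^ ((n + D) choose D)"
proof -
  have "card (poly_funs n D :: ((nat \<Rightarrow> 'a) \<Rightarrow> 'a) set)
          \<le> card (multisets_of_size {..n} D \<rightarrow>\<^sub>E (UNIV :: 'a set))"
    unfolding poly_funs_eq_image by (rule card_image_le) (simp add: finite_PiE finite_multisets_of_size_atMost)
  also have "\<dots> = CARD('a) ^ ((n + D) choose D)"
    by (simp add: card_PiE finite_multisets_of_size_atMost card_multisets_of_size)
  finally show ?thesis .
qed

text \<open>Evaluation at z l recovers the l-th coefficient, so distinct coefficient vectors give
distinct combinations.\<close>
lemma biorthogonal_card_power_le:
  fixes g :: "nat \<Rightarrow> 'b \<Rightarrow> 'a::{comm_ring_1,finite}"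
  assumes "finite V" and comb: "\<And>c. (\<lambda>y. \<Sum>i<m. c i * g i y) \<in> V"
    and biorth: "\<And>i l. i < m \<Longrightarrow> l < m \<Longrightarrow> g i (z l) = (if i = l then 1 else 0)"
  shows "CARD('a) ^ m \<le> card V"
proof -
  let ?C = "{..<m} \<rightarrow>\<^sub>E (UNIV :: 'a set)"
  let ?comb = "\<lambda>c y. \<Sum>i<m. c i * g i y"
  have eval: "?comb c (z l) = c l" if "l < m" for c l
    using that by (simp add: biorth if_distrib[of "\<lambda>x. _ * x"] cong: if_cong)
  have "inj_on ?comb ?C"
  proof (rule inj_onI)
    fix c d assume cd: "c \<in> ?C" "d \<in> ?C" and eq: "?comb c = ?comb d"
    show "c = d"
    proof (rule PiE_ext[OF cd])
      fix l assume "l \<in> {..<m}"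
      then have "c l = ?comb c (z l)" and "d l = ?comb d (z l)" by (simp_all add: eval)
      moreover have "?comb c (z l) = ?comb d (z l)" using eq by (rule fun_cong)
      ultimately show "c l = d l" by simp
    qed
  qed
  then have "card ?C = card (?comb ` ?C)" by (simp add: card_image)
  also have "\<dots> \<le> card V" by (intro card_mono[OF assms(1)] image_subsetI comb)
  finally show ?thesis by (simp add: card_PiE)
qed

subsection \<open>Right corners\<close>

definition corner_points :: "nat \<Rightarrow> (nat \<Rightarrow> 'b) \<Rightarrow> 'b set" where
  "corner_points j x = x ` {1..j+1}"

definition corner_free :: "nat \<Rightarrow> nat \<Rightarrow> (nat \<Rightarrow> 'a::comm_ring_1) set \<Rightarrow> bool" where
  "corner_free n j S \<longleftrightarrow> \<not> (\<exists>x. corner_points j x \<subseteq> S \<and> right_corner n j x)"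

lemma corner_points_subset_iff: "corner_points j x \<subseteq> S \<longleftrightarrow> (\<forall>i\<in>{1..j+1}. x i \<in> S)"
  unfolding corner_points_def by auto

lemma apex_in_corner_points: "x (j+1) \<in> corner_points j x"
  unfolding corner_points_def by auto

lemma card_corner_points_le: "card (corner_points j x) \<le> Suc j"
  unfolding corner_points_def using card_image_le[of "{1..j+1}" x] by simp

lemma right_corner_one:
  assumes "a \<in> Fvec n" "b \<in> Fvec n" "a \<noteq> b"
  shows "right_corner n 1 (\<lambda>i. if i = 1 then a else b)"
  using assms unfolding right_corner_def inj_on_def by auto

lemma right_corner_extend:
  fixes x :: "nat \<Rightarrow> nat \<Rightarrow> 'a::comm_ring_1"
  assumes corner: "right_corner n j x" and y: "y \<in> Fvec n" "y \<notin> corner_points j x"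
    and orth: "\<And>t. t \<in> {1..j} \<Longrightarrow> bform n (\<lambda>s. x t s - x (j+1) s) (\<lambda>s. y s - x (j+1) s) = 0"
  shows "right_corner n (Suc j) (x(j+1 := y, j+2 := x (j+1)))"
    (is "right_corner n (Suc j) ?w")
proof -
  have F: "\<forall>i\<in>{1..j+1}. x i \<in> Fvec n" and I: "inj_on x {1..j+1}"
    and O: "\<And>i k. 1 \<le> i \<Longrightarrow> i < k \<Longrightarrow> k \<le> j \<Longrightarrow>
              bform n (\<lambda>t. x i t - x (j+1) t) (\<lambda>t. x k t - x (j+1) t) = 0"
    using corner unfolding right_corner_def by auto
  have y_new: "y \<noteq> x i" if "i \<in> {1..j+1}" for i
    using y(2) that unfolding corner_points_def by auto
  have "\<forall>i\<in>{1..Suc j+1}. ?w i \<in> Fvec n" using F y(1) by auto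
  moreover have "inj_on ?w {1..Suc j+1}"
    using I y_new by (fastforce simp: inj_on_def)
  moreover have "bform n (\<lambda>t. ?w i t - ?w (Suc j+1) t) (\<lambda>t. ?w k t - ?w (Suc j+1) t) = 0"
    if "1 \<le> i" "i < k" "k \<le> Suc j" for i k
    using that O[of i k] orth[of i] by (cases "k = j+1") auto
  ultimately show ?thesis unfolding right_corner_def by blast
qed

lemma maximal_disjoint_corners:
  fixes S :: "(nat \<Rightarrow> 'a::comm_ring_1) set"
  assumes "finite S"
  shows "\<exists>L. (\<forall>x\<in>set L. corner_points j x \<subseteq> S \<and> right_corner n j x) \<and>
             disjoint_family_on (\<lambda>i. corner_points j (L!i)) {..<length L} \<and>
             corner_free n j (S - (\<Union>x\<in>set L. corner_points j x))"
  using assms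
proof (induction "card S" arbitrary: S rule: less_induct)
  case less
  show ?case
  proof (cases "corner_free n j S")
    case True
    then show ?thesis by (intro exI[of _ "[]"]) (simp add: disjoint_family_on_def)
  next
    case False
    then obtain x where x: "corner_points j x \<subseteq> S" "right_corner n j x"
      unfolding corner_free_def by blast
    let ?S = "S - corner_points j x"
    have "card ?S < card S"
      using x(1) apex_in_corner_points less.prems by (intro psubset_card_mono) auto
    then obtain L where L: "\<forall>y\<in>set L. corner_points j y \<subseteq> ?S \<and> right_corner n j y"
      "disjoint_family_on (\<lambda>i. corner_points j (L!i)) {..<length L}"
      "corner_free n j (?S - (\<Union>y\<in>set L. corner_points j y))"
      using less.hyps less.prems by blast
    have "disjoint_family_on (\<lambda>i. corner_points j ((x#L)!i)) {..<length (x#L)}"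
      unfolding disjoint_family_on_def
    proof (intro ballI impI)
      fix a b assume "a \<in> {..<length (x#L)}" "b \<in> {..<length (x#L)}" "a \<noteq> b"
      then show "corner_points j ((x#L)!a) \<inter> corner_points j ((x#L)!b) = {}"
        using L(1,2) nth_mem unfolding disjoint_family_on_def
        by (cases a; cases b) fastforce+
    qed
    moreover have "S - (\<Union>y\<in>set (x#L). corner_points j y) = ?S - (\<Union>y\<in>set L. corner_points j y)"
      by auto
    ultimately show ?thesis using L(1,3) x by (intro exI[of _ "x#L"]) auto
  qed
qed

lemma card_le_card_diff_corners:
  assumes "finite S"
  shows "card S \<le> card (S - (\<Union>x\<in>set L. corner_points j x)) + Suc j * length L"
proof -
  let ?U = "\<Union>x\<in>set L. corner_points j x"
  have "card ?U \<le> (\<Sum>x\<in>set L. card (corner_points j x))" by (rule card_UN_le) simp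
  also have "\<dots> \<le> card (set L) * Suc j"
    using sum_bounded_above[of "set L" "\<lambda>x. card (corner_points j x)" "Suc j"]
    by (simp add: card_corner_points_le)
  also have "\<dots> \<le> Suc j * length L" by (metis card_length mult.commute mult_le_mono1)
  finally have U: "card ?U \<le> Suc j * length L" .
  have "card S \<le> card ((S - ?U) \<union> ?U)"
    using assms by (intro card_mono) (auto simp: corner_points_def)
  also have "\<dots> \<le> card (S - ?U) + card ?U" by (rule card_Un_le)
  finally show ?thesis using U by linarith
qed

subsection \<open>The polynomial attached to a corner\<close>

definition extension_poly :: "nat \<Rightarrow> nat \<Rightarrow> (nat \<Rightarrow> nat \<Rightarrow> 'a::{field,finite}) \<Rightarrow> (nat \<Rightarrow> 'a) \<Rightarrow> 'a" where
  "extension_poly n j x y =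
     (\<Prod>t\<in>{1..j}. 1 - bform n (\<lambda>s. x t s - x (j+1) s) (\<lambda>s. y s - x (j+1) s) ^ (CARD('a) - 1))"

lemma bform_diff_right: "bform n u (\<lambda>s. y s - z s) = (\<Sum>i<n. u i * y i) + - bform n u z"
  unfolding bform_def by (simp add: right_diff_distrib sum_subtractf)

lemma extension_poly_in_poly_funs:
  "extension_poly n j (x :: nat \<Rightarrow> nat \<Rightarrow> 'a::{field,finite}) \<in> poly_funs n (j * (CARD('a) - 1))"
proof -
  have "(\<lambda>y. bform n (\<lambda>s. x t s - x (j+1) s) (\<lambda>s. y s - x (j+1) s)) \<in> poly_funs n 1" for t
    unfolding bform_diff_right by (rule poly_funs_affine)
  then have "(\<lambda>y. 1 - bform n (\<lambda>s. x t s - x (j+1) s) (\<lambda>s. y s - x (j+1) s) ^ (CARD('a) - 1))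
               \<in> poly_funs n (CARD('a) - 1)" for t
    using poly_funs_diff[OF poly_funs_const poly_funs_power] by fastforce
  from poly_funs_prod[OF _ this, of "{1..j}"] show ?thesis
    unfolding extension_poly_def[abs_def] by simp
qed

lemma extension_poly_apex: "extension_poly n j (x :: nat \<Rightarrow> nat \<Rightarrow> 'a::{field,finite}) (x (j+1)) = 1"
proof -
  have "CARD('a) - 1 \<noteq> 0" using card_field_ge_2[where 'a='a] by simp
  then show ?thesis unfolding extension_poly_def bform_def by (simp add: zero_power)
qed

lemma extension_poly_nonzero_imp_orthogonal:
  assumes "extension_poly n j (x :: nat \<Rightarrow> nat \<Rightarrow> 'a::{field,finite}) y \<noteq> 0" "t \<in> {1..j}"
  shows "bform n (\<lambda>s. x t s - x (j+1) s) (\<lambda>s. y s - x (j+1) s) = 0"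
proof (rule ccontr)
  assume "bform n (\<lambda>s. x t s - x (j+1) s) (\<lambda>s. y s - x (j+1) s) \<noteq> 0"
  then have "bform n (\<lambda>s. x t s - x (j+1) s) (\<lambda>s. y s - x (j+1) s) ^ (CARD('a) - 1) = 1"
    by (rule finite_field_power_card_minus_one)
  then have "extension_poly n j x y = 0"
    unfolding extension_poly_def using assms(2) by (intro prod_zero) auto
  with assms(1) show False by contradiction
qed

lemma disjoint_corners_length_le:
  fixes L :: "(nat \<Rightarrow> nat \<Rightarrow> 'a::{field,finite}) list"
  assumes corners: "\<forall>x\<in>set L. corner_points j x \<subseteq> S \<and> right_corner n j x"
    and disjoint: "disjoint_family_on (\<lambda>i. corner_points j (L!i)) {..<length L}"
    and "S \<subseteq> Fvec n" and free: "corner_free n (Suc j) S"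
  shows "length L \<le> (n + j * (CARD('a) - 1)) choose (j * (CARD('a) - 1))"
proof -
  let ?D = "j * (CARD('a) - 1)"
  let ?apex = "\<lambda>l. (L!l) (j+1)"
  let ?g = "\<lambda>i. extension_poly n j (L!i)"
  have vanish: "?g i (?apex l) = 0" if "i < length L" "l < length L" "i \<noteq> l" for i l
  proof (rule ccontr)
    assume nonzero: "?g i (?apex l) \<noteq> 0"
    have corner: "right_corner n j (L!i)" "corner_points j (L!i) \<subseteq> S"
      using corners that nth_mem by blast+
    have "?apex l \<in> S" using corners that(2) nth_mem apex_in_corner_points by blast
    moreover have "?apex l \<notin> corner_points j (L!i)"
      using disjoint that apex_in_corner_points unfolding disjoint_family_on_def by blast
    ultimately have "right_corner n (Suc j) ((L!i)(j+1 := ?apex l, j+2 := (L!i) (j+1)))"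
      using assms(3) extension_poly_nonzero_imp_orthogonal[OF nonzero]
      by (intro right_corner_extend[OF corner(1)]) auto
    moreover have "corner_points (Suc j) ((L!i)(j+1 := ?apex l, j+2 := (L!i) (j+1))) \<subseteq> S"
      using corner(2) \<open>?apex l \<in> S\<close> unfolding corner_points_def by auto
    ultimately show False using free unfolding corner_free_def by blast
  qed
  have "CARD('a) ^ length L \<le> card (poly_funs n ?D :: ((nat \<Rightarrow> 'a) \<Rightarrow> 'a) set)"
  proof (rule biorthogonal_card_power_le[where z = ?apex])
    show "(\<lambda>y. \<Sum>i<length L. c i * ?g i y) \<in> poly_funs n ?D" for c
      by (intro poly_funs_sum poly_funs_scale extension_poly_in_poly_funs) simp
    show "?g i (?apex l) = (if i = l then 1 else 0)" if "i < length L" "l < length L" for i l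
      using vanish that extension_poly_apex[of n j "L!l"] by (cases "i = l") simp_all
  qed (rule finite_poly_funs)
  also have "\<dots> \<le> CARD('a) ^ ((n + ?D) choose ?D)" by (rule card_poly_funs_le)
  finally show ?thesis
    by (rule power_le_imp_le_exp[rotated]) (use card_field_ge_2[where 'a='a] in simp)
qed

lemma corner_free_card_le:
  fixes S :: "(nat \<Rightarrow> 'a::{field,finite}) set"
  assumes "1 \<le> j" "finite S" "S \<subseteq> Fvec n" "corner_free n j S"
  shows "card S \<le> j * ((n + (j - 1) * CARD('a)) choose ((j - 1) * (CARD('a) - 1)))"
  using assms
proof (induction j arbitrary: S rule: nat_induct_at_least)
  case base
  have "a = b" if "a \<in> S" "b \<in> S" for a b
  proof (rule ccontr)
    assume "a \<noteq> b"
    then have "right_corner n 1 (\<lambda>i. if i = 1 then a else b)"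
      using that base.prems(2) by (intro right_corner_one) auto
    moreover have "corner_points 1 (\<lambda>i. if i = 1 then (a :: nat \<Rightarrow> 'a) else b) \<subseteq> S"
      using that unfolding corner_points_def by auto
    ultimately show False using base.prems(3) unfolding corner_free_def by blast
  qed
  then have "card S \<le> Suc 0" using card_le_Suc0_iff_eq[OF base.prems(1)] by blast
  then show ?case by simp
next
  case (Suc j)
  let ?q = "CARD('a)"
  let ?B = "(n + (j - 1) * ?q) choose ((j - 1) * (?q - 1))"
  let ?N = "(n + j * (?q - 1)) choose (j * (?q - 1))"
  obtain L where corners: "\<forall>x\<in>set L. corner_points j x \<subseteq> S \<and> right_corner n j x"
    and disjoint: "disjoint_family_on (\<lambda>i. corner_points j (L!i)) {..<length L}"
    and rest: "corner_free n j (S - (\<Union>x\<in>set L. corner_points j x))"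
    using maximal_disjoint_corners[OF Suc.prems(1)] by blast
  have "card S \<le> card (S - (\<Union>x\<in>set L. corner_points j x)) + Suc j * length L"
    by (rule card_le_card_diff_corners[OF Suc.prems(1)])
  also have "\<dots> \<le> j * ?B + Suc j * ?N"
  proof (intro add_mono mult_le_mono2)
    show "card (S - (\<Union>x\<in>set L. corner_points j x)) \<le> j * ?B"
      using Suc.IH[OF _ _ rest] Suc.prems by auto
    show "length L \<le> ?N"
      by (rule disjoint_corners_length_le[OF corners disjoint Suc.prems(2,3)])
  qed
  also have "\<dots> \<le> Suc j * (?N + ?B)" by (simp add: algebra_simps)
  also have "\<dots> \<le> Suc j * ((n + j * ?q) choose (j * (?q - 1)))"
    using binomial_corner_step[OF Suc.hyps card_field_ge_2[where 'a='a]] by (rule mult_le_mono2)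
  finally show ?case by simp
qed

theorem theorem2:
  fixes A :: "(nat \<Rightarrow> 'a::{field,finite}) set"
    and n k p r :: nat
  assumes "k \<ge> 2"
    and "prime p" and "CARD('a) = p ^ r" and "p > k"
    and "A \<subseteq> Fvec n"
    and "card A > (k + 1) * ((n + (k - 1) * CARD('a)) choose ((k - 1) * (CARD('a) - 1)))"
  shows "\<exists>x. (\<forall>i\<in>{1..k+1}. x i \<in> A) \<and> right_corner n k x"
proof (rule ccontr)
  let ?B = "(n + (k - 1) * CARD('a)) choose ((k - 1) * (CARD('a) - 1))"
  assume "\<not> (\<exists>x. (\<forall>i\<in>{1..k+1}. x i \<in> A) \<and> right_corner n k x)"
  then have "corner_free n k A" unfolding corner_free_def corner_points_subset_iff by blast
  moreover have "finite A" using assms(6) by (intro card_ge_0_finite) linarith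
  ultimately have "card A \<le> k * ?B" using corner_free_card_le[of k A n] assms(1,5) by simp
  also have "\<dots> \<le> (k + 1) * ?B" by simp
  finally show False using assms(6) by simp
qed

end
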